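(* Let $K\ge1$, fix $a_2,\dots,a_{K+1}\ge0$, and for $x\ge0$ let $G(x)=P^{(1)}_{K+1}(x,a_2,\dots,a_{K+1})$. Let $\mathcal A_\theta$ be an $L$-layer MinAgg GNN with exactly $K$ message passing layers $\ell_1<\dots<\ell_K$ and with 1-dimensional aggregation. Let $D$ be the set of all $x\ge0$ such that $\mathcal A_\theta$ is not path derived on $G(x)$, and $Y=\{h^{(L)}_{v_{K+1}}(G(x)):x\in D\}$. Then $|Y|\le K$.
   Context: Attributed graphs have nonnegative edge weights and node features, a self-loop of weight $0$ at each node, and $\mathcal N(v)=\{v\}\cup\{u:\{u,v\}\in E\}$. A large constant $\beta>0$ encodes "infinite distance". For a source $s$, $\mathrm d^{(t)}(s,v)$ is the minimal weight of a walk from $s$ to $v$ with at most $t$ edges ($\beta$ if none). $P^{(t)}_k(a_1,\dots,a_k)$: path $v_0,\dots,v_k$, edge $\{v_{i-1},v_i\}$ of weight $a_i$, features $x_{v_i}=\mathrm d^{(t)}(v_0,v_i)$. MinAgg GNN: for each $\ell\in[L]$, $m$-layer ReLU MLPs ($x^{(j)}=\sigma(W_jx^{(j-1)}+b_j)$) $f^{\mathrm{agg},(\ell)}:\mathbb R^{d_{\ell-1}+1}\to\mathbb R^d$ and $f^{\mathrm{up},(\ell)}:\mathbb R^{d+d_{\ell-1}}\to\mathbb R^{d_\ell}$ with weight matrices $W^{\mathrm{agg},(\ell)}_j$, $W^{\mathrm{up},(\ell)}_j$; $d_0=d_L=1$, $d_\ell=d$ otherwise; $h^{(0)}_v=x_v$,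 $h^{(\ell)}_v=f^{\mathrm{up},(\ell)}\big(\min_{u\in\mathcal N(v)}f^{\mathrm{agg},(\ell)}(h^{(\ell-1)}_u\oplus x_{(u,v)})\oplus h^{(\ell-1)}_v\big)$ (coordinatewise min, $\oplus$ concatenation). A function on $\mathbb R^n_{\ge0}$ depends on a set $S$ of coordinates if some $x\ne y$ agreeing outside $S$ have different images; layer $\ell$ is message passing if $f^{\mathrm{agg},(\ell)}$ depends on its node component (first $d_{\ell-1}$ input coordinates). $\mathcal A_\theta$ has 1-dimensional aggregation if for every message passing layer $\ell_k$ the first weight matrix $W^{\mathrm{up},(\ell_k)}_1$ of $f^{\mathrm{up},(\ell_k)}$ has exactly one nonzero entry. $\mathcal A_\theta$ is path derived on $P^{(1)}_{K+1}(a_1,\dots,a_{K+1})$ if for every $k\in[K]$, $$h^{(\ell_k)}_{v_{k+1}}=f^{\mathrm{up},(\ell_k)}\Big(f^{\mathrm{agg},(\ell_k)}\big(h^{(\ell_k-1)}_{v_k}\oplus x_{(v_k,v_{k+1})}\big)\oplus h^{(\ell_k-1)}_{v_{k+1}}\Big).$$ *)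

theory Defs
  imports Complex_Main
begin

text \<open>An undirected graph is given by a set of 2-element edges E; edge weights are a function
  on edges; every node additionally carries a self-loop of weight 0.\<close>

definition nbhd :: "'v set set \<Rightarrow> 'v \<Rightarrow> 'v set" where
  "nbhd E v = {v} \<union> {u. {u, v} \<in> E}"

definition ef :: "('v set \<Rightarrow> real) \<Rightarrow> 'v \<Rightarrow> 'v \<Rightarrow> real" where
  "ef w u v = (if u = v then 0 else w {u, v})"

definition walks :: "'v set set \<Rightarrow> nat \<Rightarrow> 'v \<Rightarrow> 'v \<Rightarrow> 'v list set" where
  "walks E t s v = {vs. vs \<noteq> [] \<and> hd vs = s \<and> last vs = v \<and> length vs \<le> t + 1 \<and>
      (\<forall>i. Suc i < length vs \<longrightarrow> vs ! Suc i \<in> nbhd E (vs ! i))}"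

definition walk_weight :: "('v set \<Rightarrow> real) \<Rightarrow> 'v list \<Rightarrow> real" where
  "walk_weight w vs = (\<Sum>i < length vs - 1. ef w (vs ! i) (vs ! Suc i))"

text \<open>d^(t)(s,v), with beta encoding infinite distance\<close>
definition dist_t :: "real \<Rightarrow> 'v set set \<Rightarrow> ('v set \<Rightarrow> real) \<Rightarrow> nat \<Rightarrow> 'v \<Rightarrow> 'v \<Rightarrow> real" where
  "dist_t \<beta> E w t s v =
     (if walks E t s v = {} then \<beta> else Inf (walk_weight w ` walks E t s v))"

text \<open>Nodes v_0,...,v_(K+1) are the naturals 0..K+1; edge {i-1,i} has weight a i.\<close>
definition path_E :: "nat \<Rightarrow> nat set set" where
  "path_E K = {{i - 1, i} | i. i \<in> {1..K+1}}"

definition path_w :: "(nat \<Rightarrow> real) \<Rightarrow> nat set \<Rightarrow> real" where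
  "path_w a e = a (Max e)"

definition path_feat :: "real \<Rightarrow> nat \<Rightarrow> (nat \<Rightarrow> real) \<Rightarrow> nat \<Rightarrow> real" where
  "path_feat \<beta> K a i = dist_t \<beta> (path_E K) (path_w a) 1 0 i"

type_synonym layer = "real list list \<times> real list"  \<comment> \<open>(W, b), W given by its rows\<close>

definition relu :: "real \<Rightarrow> real" where "relu r = max 0 r"

definition mat_vec :: "real list list \<Rightarrow> real list \<Rightarrow> real list" where
  "mat_vec W x = map (\<lambda>row. \<Sum>j < length x. row ! j * x ! j) W"

fun mlp_apply :: "layer list \<Rightarrow> real list \<Rightarrow> real list" where
  "mlp_apply [] x = x"
| "mlp_apply ((W, b) # Ls) x = mlp_apply Ls (map relu (map2 (+) (mat_vec W x) b))"

fun mlp_wf :: "nat \<Rightarrow> nat \<Rightarrow> layer list \<Rightarrow> bool" where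
  "mlp_wf nin nout [] = (nin = nout)"
| "mlp_wf nin nout ((W, b) # Ls) =
     (length b = length W \<and> (\<forall>r \<in> set W. length r = nin) \<and> mlp_wf (length W) nout Ls)"

text \<open>A GNN is a list of L layers (f_agg, f_up), layer l being the (l-1)-th list entry.\<close>
type_synonym gnn = "(layer list \<times> layer list) list"

definition dim :: "nat \<Rightarrow> nat \<Rightarrow> nat \<Rightarrow> nat" where
  "dim L d l = (if l = 0 \<or> l = L then 1 else d)"

definition gnn_wf :: "nat \<Rightarrow> nat \<Rightarrow> nat \<Rightarrow> gnn \<Rightarrow> bool" where
  "gnn_wf m d L \<theta> \<longleftrightarrow> length \<theta> = L \<and>
     (\<forall>l \<in> {1..L}. length (fst (\<theta> ! (l - 1))) = m \<and> length (snd (\<theta> ! (l - 1))) = m \<and>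
        mlp_wf (dim L d (l - 1) + 1) d (fst (\<theta> ! (l - 1))) \<and>
        mlp_wf (d + dim L d (l - 1)) (dim L d l) (snd (\<theta> ! (l - 1))))"

definition agg :: "gnn \<Rightarrow> nat \<Rightarrow> layer list" where "agg \<theta> l = fst (\<theta> ! (l - 1))"
definition upd :: "gnn \<Rightarrow> nat \<Rightarrow> layer list" where "upd \<theta> l = snd (\<theta> ! (l - 1))"

definition cmin :: "nat \<Rightarrow> 'v set \<Rightarrow> ('v \<Rightarrow> real list) \<Rightarrow> real list" where
  "cmin d S f = map (\<lambda>i. Min ((\<lambda>u. f u ! i) ` S)) [0..<d]"

fun hid :: "gnn \<Rightarrow> nat \<Rightarrow> 'v set set \<Rightarrow> ('v set \<Rightarrow> real) \<Rightarrow> ('v \<Rightarrow> real) \<Rightarrow> nat \<Rightarrow> 'v \<Rightarrow> real list" where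
  "hid \<theta> d E w x 0 v = [x v]"
| "hid \<theta> d E w x (Suc l) v =
     mlp_apply (upd \<theta> (Suc l))
       (cmin d (nbhd E v) (\<lambda>u. mlp_apply (agg \<theta> (Suc l)) (hid \<theta> d E w x l u @ [ef w u v]))
        @ hid \<theta> d E w x l v)"

definition depends_on :: "nat \<Rightarrow> (real list \<Rightarrow> real list) \<Rightarrow> nat set \<Rightarrow> bool" where
  "depends_on n f S \<longleftrightarrow> (\<exists>x y. length x = n \<and> length y = n \<and> (\<forall>i<n. 0 \<le> x ! i \<and> 0 \<le> y ! i) \<and>
      x \<noteq> y \<and> (\<forall>i<n. i \<notin> S \<longrightarrow> x ! i = y ! i) \<and> f x \<noteq> f y)"

definition message_passing :: "nat \<Rightarrow> nat \<Rightarrow> gnn \<Rightarrow> nat \<Rightarrow> bool" where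
  "message_passing d L \<theta> l \<longleftrightarrow>
     depends_on (dim L d (l - 1) + 1) (mlp_apply (agg \<theta> l)) {0..<dim L d (l - 1)}"

definition one_nonzero :: "real list list \<Rightarrow> bool" where
  "one_nonzero W \<longleftrightarrow> card {(i, j). i < length W \<and> j < length (W ! i) \<and> W ! i ! j \<noteq> 0} = 1"

definition one_dim_aggregation :: "nat \<Rightarrow> nat \<Rightarrow> gnn \<Rightarrow> bool" where
  "one_dim_aggregation d L \<theta> \<longleftrightarrow>
     (\<forall>l \<in> {1..L}. message_passing d L \<theta> l \<longrightarrow> one_nonzero (fst (hd (upd \<theta> l))))"

definition path_derived ::
  "gnn \<Rightarrow> nat \<Rightarrow> nat \<Rightarrow> (nat \<Rightarrow> nat) \<Rightarrow> nat set set \<Rightarrow> (nat set \<Rightarrow> real) \<Rightarrow> (nat \<Rightarrow> real) \<Rightarrow> bool" where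
  "path_derived \<theta> d K ls E w x \<longleftrightarrow>
     (\<forall>k \<in> {1..K}. hid \<theta> d E w x (ls k) (k + 1) =
        mlp_apply (upd \<theta> (ls k))
          (mlp_apply (agg \<theta> (ls k)) (hid \<theta> d E w x (ls k - 1) k @ [ef w k (k + 1)])
           @ hid \<theta> d E w x (ls k - 1) (k + 1)))"

end

theory Submission
  imports Defs
begin

(* The weight x = a_1 enters G(x) only at v_1 (through its feature and the edge {v_0, v_1}),
   and every message passing layer carries information one edge further along the path; so
   after layer l every node beyond v_(c+1), c the number of message passing layers among the
   first l, has a state independent of x.  With 1-dimensional aggregation the update of layer
   l_k reads a single input coordinate.  If the path-derived equation fails at k, that
   coordinate is an aggregated one at which the message of v_k is not the minimum, so it is
   the minimum over the messages of v_(k+1), v_(k+2), which do not depend on x; hence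
   h^(l_k)_(v_(k+1)) does not depend on x.  If k is the last failing index, the later
   layers pass this value on along the path up to v_(K+1), so the output is a function of
   the last failing index, which ranges over {1..K}. *)

lemma length_mlp_apply:
  "mlp_wf n nout Ls \<Longrightarrow> length v = n \<Longrightarrow> length (mlp_apply Ls v) = nout"
proof (induction Ls arbitrary: n v)
  case Nil
  then show ?case by simp
next
  case (Cons La Ls)
  obtain W b where "La = (W, b)" by fastforce
  with Cons.prems Cons.IH[of "length W"] show ?case by (auto simp: mat_vec_def)
qed

lemma mlp_apply_nonneg_if_nonneg:
  "\<forall>i<length v. 0 \<le> v ! i \<Longrightarrow> i < length (mlp_apply Ls v) \<Longrightarrow> 0 \<le> mlp_apply Ls v ! i"
proof (induction Ls arbitrary: v)
  case Nil
  then show ?case by simp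
next
  case (Cons La Ls)
  obtain W b where "La = (W, b)" by fastforce
  with Cons show ?case by (auto simp: relu_def)
qed

lemma mlp_apply_nonneg:
  assumes "Ls \<noteq> []" and "i < length (mlp_apply Ls v)"
  shows "0 \<le> mlp_apply Ls v ! i"
proof -
  obtain W b Ls' where Ls: "Ls = (W, b) # Ls'"
    using assms(1) by (cases Ls) auto
  show ?thesis
    using assms(2) mlp_apply_nonneg_if_nonneg[of "map relu (map2 (+) (mat_vec W v) b)" i Ls']
    by (auto simp: Ls relu_def)
qed

lemma mat_vec_determined_by_coordinate:
  assumes "one_nonzero W" and rows: "\<forall>row \<in> set W. length row = n"
  shows "\<exists>c<n. \<forall>v v'. length v = n \<longrightarrow> length v' = n \<longrightarrow> v ! c = v' ! c \<longrightarrow>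
           mat_vec W v = mat_vec W v'"
proof -
  let ?S = "{(i, j). i < length W \<and> j < length (W ! i) \<and> W ! i ! j \<noteq> 0}"
  have "card ?S = 1" using assms(1) by (simp add: one_nonzero_def)
  then obtain p where "?S = {p}" by (rule card_1_singletonE)
  moreover obtain r c where "p = (r, c)" by fastforce
  ultimately have S: "?S = {(r, c)}" by simp
  have row_length: "length (W ! i) = n" if "i < length W" for i
    using rows that by simp
  have "(r, c) \<in> ?S" using S by blast
  then have "c < n" using row_length by auto
  have zero: "W ! i ! j = 0" if "i < length W" "j < n" "(i, j) \<noteq> (r, c)" for i j
  proof (rule ccontr)
    assume "W ! i ! j \<noteq> 0"
    with that row_length have "(i, j) \<in> ?S" by simp
    with S that(3) show False by blast
  qed
  have "mat_vec W v = mat_vec W v'"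
    if "length v = n" "length v' = n" "v ! c = v' ! c" for v v'
  proof -
    have "(\<Sum>j<n. W ! i ! j * v ! j) = (\<Sum>j<n. W ! i ! j * v' ! j)" if "i < length W" for i
      using zero[OF that] \<open>v ! c = v' ! c\<close> by (intro sum.cong) fastforce+
    with that show ?thesis by (auto simp: mat_vec_def in_set_conv_nth)
  qed
  with \<open>c < n\<close> show ?thesis by blast
qed

lemma mlp_apply_determined_by_coordinate:
  assumes "one_nonzero (fst (hd Ls))" and "mlp_wf n nout Ls" and "Ls \<noteq> []"
  shows "\<exists>c<n. \<forall>v v'. length v = n \<longrightarrow> length v' = n \<longrightarrow> v ! c = v' ! c \<longrightarrow>
           mlp_apply Ls v = mlp_apply Ls v'"
proof -
  obtain W b Ls' where Ls: "Ls = (W, b) # Ls'"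
    using assms(3) by (cases Ls) auto
  have "one_nonzero W" and "\<forall>row \<in> set W. length row = n"
    using assms(1,2) by (simp_all add: Ls)
  then obtain c where "c < n" and c: "\<forall>v v'. length v = n \<longrightarrow> length v' = n \<longrightarrow>
      v ! c = v' ! c \<longrightarrow> mat_vec W v = mat_vec W v'"
    using mat_vec_determined_by_coordinate by blast
  show ?thesis
  proof (intro exI[of _ c] conjI allI impI)
    fix v v' :: "real list"
    assume "length v = n" "length v' = n" "v ! c = v' ! c"
    with c have "mat_vec W v = mat_vec W v'" by blast
    then show "mlp_apply Ls v = mlp_apply Ls v'" by (simp add: Ls)
  qed fact
qed

lemma cmin_nth_not_attained:
  assumes "c < d" and "finite R" and "R \<noteq> {}" and "cmin d (insert k R) F ! c \<noteq> F k ! c"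
  shows "cmin d (insert k R) F ! c = Min ((\<lambda>u. F u ! c) ` R)"
  using assms by (auto simp: cmin_def min_def)

lemma cmin_nth_if_update_differs:
  assumes c: "\<forall>v v'. length v = n \<longrightarrow> length v' = n \<longrightarrow> v ! c = v' ! c \<longrightarrow> f v = f v'"
    and "length (F k) = d" and "d + length h = n" and "finite R" and "R \<noteq> {}"
    and "f (cmin d (insert k R) F @ h) \<noteq> f (F k @ h)"
  shows "c < d \<and> cmin d (insert k R) F ! c = Min ((\<lambda>u. F u ! c) ` R)"
proof -
  have len: "length (cmin d (insert k R) F) = d" by (simp add: cmin_def)
  with c assms(2,3,6) have ne: "(cmin d (insert k R) F @ h) ! c \<noteq> (F k @ h) ! c"
    by auto
  then have "c < d"
    using len assms(2) by (cases "c < d") (simp_all add: nth_append)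
  with ne have "cmin d (insert k R) F ! c \<noteq> F k ! c"
    using len assms(2) by (simp add: nth_append)
  with \<open>c < d\<close> show ?thesis
    using cmin_nth_not_attained[OF \<open>c < d\<close> assms(4,5)] by simp
qed

lemma gnn_wf_layerD:
  assumes "gnn_wf m d L \<theta>" and "l \<in> {1..L}"
  shows "length (agg \<theta> l) = m" "length (upd \<theta> l) = m"
    "mlp_wf (dim L d (l - 1) + 1) d (agg \<theta> l)"
    "mlp_wf (d + dim L d (l - 1)) (dim L d l) (upd \<theta> l)"
  using assms by (simp_all add: gnn_wf_def agg_def upd_def)

lemma length_hid:
  assumes "gnn_wf m d L \<theta>" and "l \<le> L"
  shows "length (hid \<theta> d E w x l v) = dim L d l"
  using assms(2)
proof (induction l arbitrary: v)
  case 0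
  then show ?case by (simp add: dim_def)
next
  case (Suc l)
  with gnn_wf_layerD(4)[OF assms(1), of "Suc l"] show ?case
    by (auto intro!: length_mlp_apply simp: cmin_def)
qed

lemma hid_nonneg:
  assumes "gnn_wf m d L \<theta>" and "1 \<le> m" and "\<forall>v. 0 \<le> x v" and "l \<le> L"
    and "i < length (hid \<theta> d E w x l v)"
  shows "0 \<le> hid \<theta> d E w x l v ! i"
proof (cases l)
  case 0
  with assms(3,5) show ?thesis by simp
next
  case (Suc l')
  with assms(1,2,4) have "upd \<theta> (Suc l') \<noteq> []"
    using gnn_wf_layerD(2)[of m d L \<theta> "Suc l'"] by auto
  with assms(5) show ?thesis by (auto simp: Suc intro: mlp_apply_nonneg)
qed

lemma hid_Suc_eqI:
  assumes "\<And>u. u \<in> nbhd E v \<Longrightarrow>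
      mlp_apply (agg \<theta> (Suc l)) (hid \<theta> d E w x l u @ [ef w u v]) =
      mlp_apply (agg \<theta> (Suc l)) (hid \<theta> d E w' x' l u @ [ef w' u v])"
    and "hid \<theta> d E w x l v = hid \<theta> d E w' x' l v"
  shows "hid \<theta> d E w x (Suc l) v = hid \<theta> d E w' x' (Suc l) v"
proof -
  have "cmin d (nbhd E v) (\<lambda>u. mlp_apply (agg \<theta> (Suc l)) (hid \<theta> d E w x l u @ [ef w u v])) =
        cmin d (nbhd E v) (\<lambda>u. mlp_apply (agg \<theta> (Suc l)) (hid \<theta> d E w' x' l u @ [ef w' u v]))"
    unfolding cmin_def using assms(1) by (metis (no_types, lifting) image_cong)
  with assms(2) show ?thesis by simp
qed

lemma agg_eq_if_not_message_passing:
  assumes "\<not> message_passing d L \<theta> l"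
    and "length p = dim L d (l - 1)" and "length q = dim L d (l - 1)"
    and "\<forall>i<length p. 0 \<le> p ! i" and "\<forall>i<length q. 0 \<le> q ! i" and "0 \<le> e"
  shows "mlp_apply (agg \<theta> l) (p @ [e]) = mlp_apply (agg \<theta> l) (q @ [e])"
proof (rule ccontr)
  assume "mlp_apply (agg \<theta> l) (p @ [e]) \<noteq> mlp_apply (agg \<theta> l) (q @ [e])"
  then have "depends_on (dim L d (l - 1) + 1) (mlp_apply (agg \<theta> l)) {0..<dim L d (l - 1)}"
    unfolding depends_on_def using assms(2-6)
    by (intro exI[of _ "p @ [e]"] exI[of _ "q @ [e]"]) (auto simp: nth_append)
  with assms(1) show False by (simp add: message_passing_def)
qed

lemma card_image_le_if_factors_through:
  assumes "g ` D \<subseteq> B" and "finite B" and "\<And>x y. x \<in> D \<Longrightarrow> y \<in> D \<Longrightarrow> g x = g y \<Longrightarrow> f x = f y"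
  shows "finite (f ` D) \<and> card (f ` D) \<le> card B"
proof -
  define h where "h k = f (SOME x. x \<in> D \<and> g x = k)" for k
  have "f x = h (g x)" if "x \<in> D" for x
    unfolding h_def using that assms(3) by (metis (mono_tags, lifting) someI)
  then have sub: "f ` D \<subseteq> h ` B" using assms(1) by auto
  with assms(2) have "finite (f ` D)" by (simp add: finite_subset)
  moreover have "card (f ` D) \<le> card B"
    using card_mono[OF _ sub] card_image_le[OF assms(2), of h] assms(2) by simp
  ultimately show ?thesis by blast
qed

lemma path_E_edge_iff:
  "{u, v} \<in> path_E K \<longleftrightarrow> (Suc u = v \<and> v \<le> K + 1) \<or> (Suc v = u \<and> u \<le> K + 1)"
proof
  assume "{u, v} \<in> path_E K"
  then obtain i where "{u, v} = {i - 1, i}" "i \<in> {1..K + 1}"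
    unfolding path_E_def by blast
  then show "(Suc u = v \<and> v \<le> K + 1) \<or> (Suc v = u \<and> u \<le> K + 1)"
    by (auto simp: doubleton_eq_iff)
next
  assume "(Suc u = v \<and> v \<le> K + 1) \<or> (Suc v = u \<and> u \<le> K + 1)"
  then have "{u, v} = {max u v - 1, max u v} \<and> max u v \<in> {1..K + 1}"
    by auto
  then show "{u, v} \<in> path_E K"
    unfolding path_E_def by blast
qed

lemma nbhd_path_E_iff:
  "u \<in> nbhd (path_E K) v \<longleftrightarrow> u = v \<or> (Suc u = v \<and> v \<le> K + 1) \<or> (Suc v = u \<and> u \<le> K + 1)"
  using path_E_edge_iff[of u v] by (auto simp: nbhd_def)

lemma finite_nbhd_path_E: "finite (nbhd (path_E K) v)"
  by (rule finite_subset[of _ "{..Suc v}"]) (auto simp: nbhd_path_E_iff)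

lemma ef_path_w: "ef (path_w a) u v = (if u = v then 0 else a (max u v))"
  by (simp add: ef_def path_w_def)

lemma ef_path_w_nonneg:
  assumes "\<forall>i \<in> {1..K + 1}. 0 \<le> a i" and "u \<in> nbhd (path_E K) v"
  shows "0 \<le> ef (path_w a) u v"
  using assms by (auto simp: ef_path_w nbhd_path_E_iff max_def)

lemma walks_path_E_from_0:
  assumes "2 \<le> j"
  shows "walks (path_E K) 1 0 j = {}"
proof (rule ccontr)
  assume "walks (path_E K) 1 0 j \<noteq> {}"
  then obtain vs where "vs \<in> walks (path_E K) 1 0 j" by blast
  then have "vs \<noteq> []" "vs ! 0 = 0" "vs ! (length vs - 1) = j" "length vs \<le> 2"
    and step: "length vs = 2 \<Longrightarrow> vs ! 1 \<in> nbhd (path_E K) (vs ! 0)"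
    by (auto simp: walks_def hd_conv_nth last_conv_nth)
  with assms show False
    by (cases "length vs = 1") (auto simp: nbhd_path_E_iff le_Suc_eq numeral_2_eq_2)
qed

lemma path_feat_beyond_v1:
  assumes "2 \<le> j"
  shows "path_feat \<beta> K a j = \<beta>"
  using walks_path_E_from_0[OF assms, of K] by (simp add: path_feat_def dist_t_def)

lemma path_feat_nonneg:
  assumes "0 \<le> \<beta>" and a: "\<forall>i \<in> {1..K + 1}. 0 \<le> a i"
  shows "0 \<le> path_feat \<beta> K a j"
proof (cases "walks (path_E K) 1 0 j = {}")
  case True
  with assms(1) show ?thesis by (simp add: path_feat_def dist_t_def)
next
  case False
  have "0 \<le> walk_weight (path_w a) vs" if "vs \<in> walks (path_E K) 1 0 j" for vs
    unfolding walk_weight_def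
  proof (rule sum_nonneg)
    fix i assume "i \<in> {..<length vs - 1}"
    with that have "vs ! Suc i \<in> nbhd (path_E K) (vs ! i)"
      by (auto simp: walks_def)
    then have "vs ! i \<in> nbhd (path_E K) (vs ! Suc i)"
      by (auto simp: nbhd_path_E_iff)
    with a show "0 \<le> ef (path_w a) (vs ! i) (vs ! Suc i)"
      by (rule ef_path_w_nonneg)
  qed
  with False show ?thesis
    by (auto simp: path_feat_def dist_t_def intro: cInf_greatest)
qed

locale path_gnn =
  fixes K L m d :: nat and \<beta> :: real and a :: "nat \<Rightarrow> real" and \<theta> :: gnn
    and ls :: "nat \<Rightarrow> nat"
  assumes beta_pos: "\<beta> > 0" and m_pos: "m \<ge> 1"
    and a_nonneg: "\<forall>i \<in> {2..K+1}. a i \<ge> 0"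
    and wf: "gnn_wf m d L \<theta>"
    and ls_strict_mono: "strict_mono_on {1..K} ls"
    and ls_image: "ls ` {1..K} = {l \<in> {1..L}. message_passing d L \<theta> l}"
    and one_dim: "one_dim_aggregation d L \<theta>"
begin

abbreviation "wt x \<equiv> path_w (a(1 := x))"
abbreviation "feat x \<equiv> path_feat \<beta> K (a(1 := x))"
abbreviation "state x l v \<equiv> hid \<theta> d (path_E K) (wt x) (feat x) l v"
abbreviation "message x l u v \<equiv> mlp_apply (agg \<theta> (Suc l)) (state x l u @ [ef (wt x) u v])"

lemma ef_wt_eq: "2 \<le> max u v \<Longrightarrow> ef (wt x) u v = ef (wt x') u v"
  by (simp add: ef_path_w)

lemma weights_nonneg: "0 \<le> x \<Longrightarrow> \<forall>i \<in> {1..K + 1}. 0 \<le> (a(1 := x)) i"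
  using a_nonneg by (auto simp: numeral_2_eq_2 Suc_le_eq)

lemma length_state: "l \<le> L \<Longrightarrow> length (state x l v) = dim L d l"
  by (rule length_hid[OF wf])

lemma state_nonneg:
  "0 \<le> x \<Longrightarrow> l \<le> L \<Longrightarrow> i < length (state x l v) \<Longrightarrow> 0 \<le> state x l v ! i"
  using beta_pos weights_nonneg path_feat_nonneg by (intro hid_nonneg[OF wf m_pos]) auto

lemma length_message: "Suc l \<le> L \<Longrightarrow> length (message x l u v) = d"
  using gnn_wf_layerD(3)[OF wf, of "Suc l"] length_state[of l]
  by (intro length_mlp_apply) auto

lemma state_Suc_eq_if_not_message_passing:
  assumes "Suc l \<le> L" and "\<not> message_passing d L \<theta> (Suc l)" and "2 \<le> j"
    and "0 \<le> x" and "0 \<le> x'" and "state x l j = state x' l j"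
  shows "state x (Suc l) j = state x' (Suc l) j"
proof (rule hid_Suc_eqI)
  fix u assume u: "u \<in> nbhd (path_E K) j"
  have "ef (wt x) u j = ef (wt x') u j"
    using assms(3) by (intro ef_wt_eq) simp
  moreover have "0 \<le> ef (wt x) u j"
    using ef_path_w_nonneg[OF weights_nonneg[OF assms(4)] u] .
  then have "message x l u j = mlp_apply (agg \<theta> (Suc l)) (state x' l u @ [ef (wt x) u j])"
    using assms(1,2,4,5) length_state[of l] state_nonneg
    by (intro agg_eq_if_not_message_passing[of d L \<theta> "Suc l"]) auto
  ultimately show "message x l u j = message x' l u j" by simp
qed (rule assms(6))

definition mp_count :: "nat \<Rightarrow> nat" where
  "mp_count l = card {k \<in> {1..K}. ls k \<le> l}"

lemma ls_message_passing: "k \<in> {1..K} \<Longrightarrow> ls k \<in> {1..L} \<and> message_passing d L \<theta> (ls k)"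
  using ls_image by blast

lemma message_passing_iff: "l \<in> {1..L} \<Longrightarrow> message_passing d L \<theta> l \<longleftrightarrow> l \<in> ls ` {1..K}"
  using ls_image by blast

lemma ls_less_iff: "k \<in> {1..K} \<Longrightarrow> k' \<in> {1..K} \<Longrightarrow> ls k < ls k' \<longleftrightarrow> k < k'"
  using strict_mono_on_less[OF ls_strict_mono] by blast

lemma ls_le_iff: "k \<in> {1..K} \<Longrightarrow> k' \<in> {1..K} \<Longrightarrow> ls k \<le> ls k' \<longleftrightarrow> k \<le> k'"
  using strict_mono_on_less_eq[OF ls_strict_mono] by blast

lemma mp_count_ls:
  assumes k: "k \<in> {1..K}"
  shows "mp_count (ls k) = k"
proof -
  have "{k' \<in> {1..K}. ls k' \<le> ls k} = {1..k}" using k ls_le_iff[OF _ k] by auto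
  then show ?thesis by (simp add: mp_count_def)
qed

lemma mp_count_before_ls:
  assumes k: "k \<in> {1..K}"
  shows "mp_count (ls k - 1) = k - 1"
proof -
  have "{k' \<in> {1..K}. ls k' \<le> ls k - 1} = {k' \<in> {1..K}. ls k' < ls k}"
    using k ls_message_passing by fastforce
  also have "\<dots> = {1..k - 1}" using ls_less_iff[OF _ k] k by auto
  finally show ?thesis by (simp add: mp_count_def)
qed

lemma mp_count_at_ls:
  assumes "k \<in> {1..K}" and "ls k = Suc l"
  shows "mp_count (Suc l) = k" and "mp_count l = k - 1"
  using mp_count_ls[OF assms(1)] mp_count_before_ls[OF assms(1)] assms(2) by simp_all

lemma mp_count_L: "mp_count L = K"
proof -
  have "{k \<in> {1..K}. ls k \<le> L} = {1..K}" using ls_message_passing by auto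
  then show ?thesis by (simp add: mp_count_def)
qed

lemma mp_count_mono: "l \<le> l' \<Longrightarrow> mp_count l \<le> mp_count l'"
  unfolding mp_count_def by (rule card_mono) auto

lemma mp_count_Suc_not_ls:
  assumes "Suc l \<notin> ls ` {1..K}"
  shows "mp_count (Suc l) = mp_count l"
proof -
  from assms have "{k \<in> {1..K}. ls k \<le> Suc l} = {k \<in> {1..K}. ls k \<le> l}"
    by (force simp: le_Suc_eq)
  then show ?thesis by (simp add: mp_count_def)
qed

lemma state_eq_beyond_reach:
  "0 \<le> x \<Longrightarrow> 0 \<le> x' \<Longrightarrow> l \<le> L \<Longrightarrow> mp_count l + 2 \<le> j \<Longrightarrow> state x l j = state x' l j"
proof (induction l arbitrary: j)
  case 0
  then show ?case by (simp add: path_feat_beyond_v1)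
next
  case (Suc l)
  show ?case
  proof (cases "Suc l \<in> ls ` {1..K}")
    case True
    then obtain k where k: "k \<in> {1..K}" "ls k = Suc l" by auto
    then have "mp_count (Suc l) = Suc (mp_count l)"
      using mp_count_at_ls by fastforce
    have same: "state x l u = state x' l u" if "u \<in> nbhd (path_E K) j" for u
    proof (rule Suc.IH)
      show "mp_count l + 2 \<le> u"
        using that Suc.prems(4) \<open>mp_count (Suc l) = Suc (mp_count l)\<close>
        by (auto simp: nbhd_path_E_iff)
    qed (use Suc.prems in auto)
    show ?thesis
    proof (rule hid_Suc_eqI)
      fix u assume u: "u \<in> nbhd (path_E K) j"
      have "ef (wt x) u j = ef (wt x') u j"
        by (rule ef_wt_eq) (use Suc.prems(4) in simp)
      with same[OF u] show "message x l u j = message x' l u j" by (simp only:)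
    qed (rule same, simp add: nbhd_def)
  next
    case False
    with Suc.prems(3) have "\<not> message_passing d L \<theta> (Suc l)"
      using message_passing_iff[of "Suc l"] by simp
    moreover have "state x l j = state x' l j"
      by (rule Suc.IH) (use Suc.prems mp_count_Suc_not_ls[OF False] in auto)
    ultimately show ?thesis
      using Suc.prems by (intro state_Suc_eq_if_not_message_passing) auto
  qed
qed

definition derivation_fails :: "real \<Rightarrow> nat \<Rightarrow> bool" where
  "derivation_fails x k \<longleftrightarrow>
     state x (ls k) (Suc k) \<noteq>
     mlp_apply (upd \<theta> (ls k))
       (mlp_apply (agg \<theta> (ls k)) (state x (ls k - 1) k @ [ef (wt x) k (Suc k)])
        @ state x (ls k - 1) (Suc k))"

lemma path_derived_iff:
  "path_derived \<theta> d K ls (path_E K) (wt x) (feat x) \<longleftrightarrow> (\<forall>k \<in> {1..K}. \<not> derivation_fails x k)"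
  by (simp add: path_derived_def derivation_fails_def)

lemma state_eq_at_failure:
  assumes x: "0 \<le> x" and x': "0 \<le> x'" and k: "k \<in> {1..K}"
    and fails: "derivation_fails x k" "derivation_fails x' k"
  shows "state x (ls k) (Suc k) = state x' (ls k) (Suc k)"
proof -
  obtain l where lsk: "ls k = Suc l" and lL: "Suc l \<le> L" and mp: "message_passing d L \<theta> (Suc l)"
    using ls_message_passing[OF k] by (cases "ls k") auto
  define U where "U = upd \<theta> (Suc l)"
  define n where "n = d + dim L d l"
  have "one_nonzero (fst (hd U))" "mlp_wf n (dim L d (Suc l)) U" "U \<noteq> []"
    using one_dim mp lL gnn_wf_layerD[OF wf, of "Suc l"] m_pos
    by (auto simp: one_dim_aggregation_def U_def n_def)
  then obtain c where "c < n" and c: "\<forall>v v'. length v = n \<longrightarrow> length v' = n \<longrightarrow>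
      v ! c = v' ! c \<longrightarrow> mlp_apply U v = mlp_apply U v'"
    using mlp_apply_determined_by_coordinate by blast
  define R where "R = nbhd (path_E K) (Suc k) - {k}"
  have nbhd_eq: "nbhd (path_E K) (Suc k) = insert k R"
    using k by (auto simp: R_def nbhd_path_E_iff)
  have "finite R" "R \<noteq> {}" and R_far: "\<forall>u \<in> R. Suc k \<le> u"
    using finite_nbhd_path_E by (auto simp: R_def nbhd_path_E_iff)
  define C where "C y = cmin d (nbhd (path_E K) (Suc k)) (\<lambda>u. message y l u (Suc k))" for y
  have state_eq: "state y (ls k) (Suc k) = mlp_apply U (C y @ state y l (Suc k))" for y
    by (simp add: lsk U_def C_def)
  have length_input: "length (C y @ state y l (Suc k)) = n" for y
    using lL length_state[of l] by (simp add: C_def cmin_def n_def)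
  \<comment> \<open>The update reads only coordinate c, so a failure at k forces c to be an aggregated
    coordinate at which the message of v_k is not the minimum.\<close>
  have C_nth: "c < d \<and> C y ! c = Min ((\<lambda>u. message y l u (Suc k) ! c) ` R)"
    if "derivation_fails y k" for y
    unfolding C_def nbhd_eq
  proof (rule cmin_nth_if_update_differs[OF c])
    show "length (message y l k (Suc k)) = d" "d + length (state y l (Suc k)) = n"
      using lL length_message length_state[of l] by (simp_all add: n_def)
    show "mlp_apply U (cmin d (insert k R) (\<lambda>u. message y l u (Suc k)) @ state y l (Suc k)) \<noteq>
        mlp_apply U (message y l k (Suc k) @ state y l (Suc k))"
      using that by (simp add: derivation_fails_def lsk U_def nbhd_eq)
  qed fact+
  have "message x l u (Suc k) = message x' l u (Suc k)" if "u \<in> R" for u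
  proof -
    from k R_far mp_count_at_ls(2)[OF k lsk] that have "state x l u = state x' l u"
      using state_eq_beyond_reach[OF x x'] lL by auto
    moreover have "ef (wt x) u (Suc k) = ef (wt x') u (Suc k)"
      using k by (intro ef_wt_eq) auto
    ultimately show ?thesis by (simp only:)
  qed
  then have "C x ! c = C x' ! c"
    using C_nth[OF fails(1)] C_nth[OF fails(2)] by (metis (no_types, lifting) image_cong)
  with C_nth[OF fails(1)] have "(C x @ state x l (Suc k)) ! c = (C x' @ state x' l (Suc k)) ! c"
    by (simp add: C_def cmin_def nth_append)
  with c length_input
  have "mlp_apply U (C x @ state x l (Suc k)) = mlp_apply U (C x' @ state x' l (Suc k))"
    by blast
  then show ?thesis by (simp only: state_eq)
qed

lemma state_eq_if_derived:
  assumes "k \<in> {1..K}" and "ls k = Suc l"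
    and "\<not> derivation_fails x k" and "\<not> derivation_fails x' k"
    and "state x l k = state x' l k" and "state x l (Suc k) = state x' l (Suc k)"
  shows "state x (Suc l) (Suc k) = state x' (Suc l) (Suc k)"
proof -
  have "ef (wt x) k (Suc k) = ef (wt x') k (Suc k)"
    using assms(1) by (intro ef_wt_eq) auto
  with assms(3-6) show ?thesis
    unfolding derivation_fails_def assms(2) by (simp only: not_not diff_Suc_1)
qed

lemma state_eq_after_last_failure:
  assumes x: "0 \<le> x" and x': "0 \<le> x'" and k: "k \<in> {1..K}"
    and fails: "derivation_fails x k" "derivation_fails x' k"
    and later: "\<And>k'. k' \<in> {1..K} \<Longrightarrow> k < k' \<Longrightarrow> \<not> derivation_fails x k' \<and> \<not> derivation_fails x' k'"
  shows "ls k \<le> l \<Longrightarrow> l \<le> L \<Longrightarrow>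
    state x l (Suc (mp_count l)) = state x' l (Suc (mp_count l))"
proof (induction l)
  case 0
  then show ?case using ls_message_passing[OF k] by simp
next
  case (Suc l)
  show ?case
  proof (cases "Suc l = ls k")
    case True
    show ?thesis
      unfolding True mp_count_ls[OF k] by (rule state_eq_at_failure[OF x x' k fails])
  next
    case False
    have IH: "state x l (Suc (mp_count l)) = state x' l (Suc (mp_count l))"
      by (rule Suc.IH) (use Suc.prems False in auto)
    have "k \<le> mp_count l"
      using mp_count_mono[of "ls k" l] mp_count_ls[OF k] Suc.prems(1) False by simp
    show ?thesis
    proof (cases "Suc l \<in> ls ` {1..K}")
      case True
      then obtain k' where k': "k' \<in> {1..K}" "ls k' = Suc l" by auto
      note count = mp_count_at_ls[OF k']
      have "k < k'" using ls_less_iff[OF k k'(1)] Suc.prems(1) False k'(2) by simp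
      show ?thesis
        unfolding count(1)
      proof (rule state_eq_if_derived[OF k'])
        show "\<not> derivation_fails x k'" "\<not> derivation_fails x' k'"
          using later[OF k'(1) \<open>k < k'\<close>] by auto
        show "state x l k' = state x' l k'"
          using IH count(2) k'(1) by simp
        show "state x l (Suc k') = state x' l (Suc k')"
          by (rule state_eq_beyond_reach[OF x x']) (use Suc.prems count(2) k'(1) in auto)
      qed
    next
      case False
      with Suc.prems(2) have "\<not> message_passing d L \<theta> (Suc l)"
        using message_passing_iff[of "Suc l"] by simp
      with \<open>k \<le> mp_count l\<close> k IH show ?thesis
        unfolding mp_count_Suc_not_ls[OF False]
        by (intro state_Suc_eq_if_not_message_passing[OF Suc.prems(2) _ _ x x']) auto
    qed
  qed
qed

definition last_failure :: "real \<Rightarrow> nat" where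
  "last_failure x = Max {k \<in> {1..K}. derivation_fails x k}"

lemma last_failureD:
  assumes "\<exists>k \<in> {1..K}. derivation_fails x k"
  shows "last_failure x \<in> {1..K}" and "derivation_fails x (last_failure x)"
    and "\<And>k. k \<in> {1..K} \<Longrightarrow> last_failure x < k \<Longrightarrow> \<not> derivation_fails x k"
proof -
  let ?F = "{k \<in> {1..K}. derivation_fails x k}"
  have "finite ?F" and "?F \<noteq> {}" using assms by auto
  then have "last_failure x \<in> ?F" unfolding last_failure_def by (rule Max_in)
  then show "last_failure x \<in> {1..K}" and "derivation_fails x (last_failure x)" by auto
  fix k assume "k \<in> {1..K}" and "last_failure x < k"
  show "\<not> derivation_fails x k"
  proof
    assume "derivation_fails x k"
    with \<open>k \<in> {1..K}\<close> have "k \<in> ?F" by simp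
    then have "k \<le> last_failure x" unfolding last_failure_def by (rule Max_ge[OF \<open>finite ?F\<close>])
    with \<open>last_failure x < k\<close> show False by simp
  qed
qed

lemma output_determined_by_last_failure:
  assumes "0 \<le> x" and "0 \<le> x'"
    and "\<exists>k \<in> {1..K}. derivation_fails x k" and "\<exists>k \<in> {1..K}. derivation_fails x' k"
    and same: "last_failure x = last_failure x'"
  shows "state x L (Suc K) = state x' L (Suc K)"
proof -
  have "state x L (Suc (mp_count L)) = state x' L (Suc (mp_count L))"
  proof (rule state_eq_after_last_failure[OF assms(1,2) last_failureD(1,2)[OF assms(3)]])
    show "derivation_fails x' (last_failure x)"
      unfolding same by (rule last_failureD(2)[OF assms(4)])
    fix k assume "k \<in> {1..K}" and "last_failure x < k"
    then show "\<not> derivation_fails x k \<and> \<not> derivation_fails x' k"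
      using last_failureD(3)[OF assms(3)] last_failureD(3)[OF assms(4)] same by auto
  next
    show "ls (last_failure x) \<le> L"
      using ls_message_passing[OF last_failureD(1)[OF assms(3)]] by simp
  qed simp
  then show ?thesis by (simp only: mp_count_L)
qed

end

theorem mainTheorem12:
  fixes K L m d :: nat and \<beta> :: real and a :: "nat \<Rightarrow> real" and \<theta> :: gnn
    and ls :: "nat \<Rightarrow> nat"
  assumes "K \<ge> 1" and "\<beta> > 0" and "m \<ge> 1"
    and "\<forall>i \<in> {2..K+1}. a i \<ge> 0"
    and "gnn_wf m d L \<theta>"
    and "strict_mono_on {1..K} ls"
    and "ls ` {1..K} = {l \<in> {1..L}. message_passing d L \<theta> l}"
    and "one_dim_aggregation d L \<theta>"
  defines "Y \<equiv> {hid \<theta> d (path_E K) (path_w (a(1 := x))) (path_feat \<beta> K (a(1 := x))) L (K + 1) | x.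
      x \<ge> 0 \<and>
      \<not> path_derived \<theta> d K ls (path_E K) (path_w (a(1 := x))) (path_feat \<beta> K (a(1 := x)))}"
  shows "finite Y \<and> card Y \<le> K"
proof -
  interpret path_gnn K L m d \<beta> a \<theta> ls
    using assms(2-8) by unfold_locales
  define D where "D = {x. 0 \<le> x \<and> (\<exists>k \<in> {1..K}. derivation_fails x k)}"
  have "Y = (\<lambda>x. state x L (Suc K)) ` D"
    unfolding Y_def D_def path_derived_iff by auto
  moreover have "finite ((\<lambda>x. state x L (Suc K)) ` D) \<and>
      card ((\<lambda>x. state x L (Suc K)) ` D) \<le> card {1..K}"
  proof (rule card_image_le_if_factors_through)
    show "last_failure ` D \<subseteq> {1..K}"
      using last_failureD(1) unfolding D_def by blast
    show "state x L (Suc K) = state y L (Suc K)"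
      if "x \<in> D" "y \<in> D" "last_failure x = last_failure y" for x y
      using that output_determined_by_last_failure unfolding D_def by blast
  qed simp
  ultimately show ?thesis by simp
qed

end
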